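(* Let $k\ge1$ be an integer and $\alpha>\beta>0$. For every $x\in\mathcal J=(\gamma_{-1},\gamma_1)$, $$ (1-x)^{\alpha+1}(1+x)^{\beta+1}W(x)\le\frac{\rho\sqrt{(\rho^2-\eta^2)(\rho^2-\sigma^2)}}{\rho-1}\,{\bf h}_k^2 . $$
   Context: $y=P_k^{(\alpha,\beta)}(x)$ is the Jacobi polynomial in the standard (Szegő) normalization, orthogonal on $[-1,1]$ with weight $(1-x)^\alpha(1+x)^\beta$, with squared norm ${\bf h}_k^2=\frac{2^{\alpha+\beta+1}\Gamma(k+\alpha+1)\Gamma(k+\beta+1)}{(2k+\alpha+\beta+1)\,k!\,\Gamma(k+\alpha+\beta+1)}$. Put $\eta=\alpha-\beta$, $\sigma=\alpha+\beta$, $\rho=2k+\alpha+\beta$, $W(x)=(\rho^2-\sigma^2)y^2-4(\eta+\sigma x)yy'+4(1-x^2)y'^2$, and $\gamma_j=\frac{j\sqrt{(\rho^2-\eta^2)(\rho^2-\sigma^2)}-\eta\sigma}{\rho^2}$ for $j=\pm1$. *)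

theory Defs
  imports "HOL-Analysis.Analysis"
begin

definition jacobiP :: "nat \<Rightarrow> real \<Rightarrow> real \<Rightarrow> real \<Rightarrow> real" where
  "jacobiP k a b x = (\<Sum>s\<le>k. ((real k + a) gchoose (k - s)) * ((real k + b) gchoose s)
       * ((x - 1) / 2) ^ s * ((x + 1) / 2) ^ (k - s))"

definition jacobi_hsq :: "nat \<Rightarrow> real \<Rightarrow> real \<Rightarrow> real" where
  "jacobi_hsq k a b = 2 powr (a + b + 1) * Gamma (real k + a + 1) * Gamma (real k + b + 1)
      / ((2 * real k + a + b + 1) * fact k * Gamma (real k + a + b + 1))"

definition jacobiW :: "nat \<Rightarrow> real \<Rightarrow> real \<Rightarrow> real \<Rightarrow> real" where
  "jacobiW k a b x =
    (let y = jacobiP k a b x; y' = deriv (jacobiP k a b) x;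
         \<eta> = a - b; \<sigma> = a + b; \<rho> = 2 * real k + a + b
     in (\<rho>^2 - \<sigma>^2) * y^2 - 4 * (\<eta> + \<sigma> * x) * y * y' + 4 * (1 - x^2) * y'^2)"

definition jacobi_gamma :: "nat \<Rightarrow> real \<Rightarrow> real \<Rightarrow> real \<Rightarrow> real" where
  "jacobi_gamma k a b j =
    (let \<eta> = a - b; \<sigma> = a + b; \<rho> = 2 * real k + a + b
     in (j * sqrt ((\<rho>^2 - \<eta>^2) * (\<rho>^2 - \<sigma>^2)) - \<eta> * \<sigma>) / \<rho>^2)"

end

(*
  Write u = (1 - x)^(a+1) (1 + x)^(b+1) and w = (1 - x)^a (1 + x)^b.  Jacobi's differential
  equation for y = P_k together with the differentiation formula
  rho (1 - x^2) y' = k (eta - rho x) y + 2 (k + a) (k + b) P_(k-1)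
  gives (u W)' = -8 (k + a) (k + b) w P_k P_(k-1).  As u W vanishes at both ends of [-1, 1],
  2 u W (x) = int_(-1)^x (u W)' - int_x^1 (u W)' <= int_(-1)^1 |(u W)'|, and
  2 |P_k P_(k-1)| <= theta P_k^2 + P_(k-1)^2 / theta with theta = sqrt (k (k + a + b) / ((k + a) (k + b)))
  bounds this by h_k^2 and h_(k-1)^2, whose ratio is explicit.  The bound holds on all of [-1, 1],
  which contains the interval J.
*)

theory Submission
  imports Defs
begin

lemma double_le_integral_if_abs_deriv_le:
  fixes Z Z' G :: "real \<Rightarrow> real"
  assumes x: "a \<le> x" "x \<le> b" and cont: "continuous_on {a..b} Z"
    and deriv: "\<And>t. a < t \<Longrightarrow> t < b \<Longrightarrow> (Z has_real_derivative Z' t) (at t)"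
    and ends: "Z a = 0" "Z b = 0" and bound: "\<And>t. t \<in> {a..b} \<Longrightarrow> \<bar>Z' t\<bar> \<le> G t"
    and G_integral: "(G has_integral I) {a..b}"
  shows "2 * Z x \<le> I"
proof -
  have FTC: "(Z' has_integral Z v - Z u) {u..v}" if "a \<le> u" "u \<le> v" "v \<le> b" for u v
  proof (rule fundamental_theorem_of_calculus_interior[OF \<open>u \<le> v\<close>])
    show "continuous_on {u..v} Z"
      by (rule continuous_on_subset[OF cont]) (use that in simp)
    show "(Z has_vector_derivative Z' t) (at t)" if "t \<in> {u<..<v}" for t
      unfolding has_real_derivative_iff_has_vector_derivative[symmetric]
      by (rule deriv) (use that \<open>a \<le> u\<close> \<open>v \<le> b\<close> in simp_all)
  qed
  have G: "(G has_integral integral {u..v} G) {u..v}" if "a \<le> u" "v \<le> b" for u v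
    by (intro integrable_integral integrable_subinterval_real[OF has_integral_integrable])
      (use G_integral that in auto)
  have bound': "\<bar>Z' t\<bar> \<le> G t" if "u \<le> t" "t \<le> v" "a \<le> u" "v \<le> b" for t u v
    using bound that by simp
  have "Z x - Z a \<le> integral {a..x} G"
    using x bound'[of a _ x] abs_le_D1
    by (intro has_integral_le[OF FTC[of a x] G[of a x]]) auto
  moreover have "- (Z b - Z x) \<le> integral {x..b} G"
    using x bound'[of x _ b] abs_le_D2
    by (intro has_integral_le[OF has_integral_neg[OF FTC[of x b]] G[of x b]]) auto
  moreover have "integral {a..x} G + integral {x..b} G = I"
    using has_integral_combine[OF x G[of a x] G[of x b]] x G_integral has_integral_unique
    by auto
  ultimately show ?thesis
    using ends by linarith
qed

lemma abs_mult_le_weighted_squares: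
  fixes y z \<theta> :: real
  assumes "0 < \<theta>"
  shows "2 * \<bar>y * z\<bar> \<le> \<theta> * y^2 + z^2 / \<theta>"
proof -
  have "\<theta> * y^2 + z^2 / \<theta> - 2 * \<bar>y * z\<bar> = (\<theta> * \<bar>y\<bar> - \<bar>z\<bar>)^2 / \<theta>"
    using assms by (simp add: field_simps power2_eq_square abs_mult)
  moreover have "0 \<le> (\<theta> * \<bar>y\<bar> - \<bar>z\<bar>)^2 / \<theta>"
    using assms by simp
  ultimately show ?thesis
    by linarith
qed

lemma sqrt_discriminant_bounds:
  fixes \<rho> \<eta> \<sigma> :: real
  assumes "\<rho> \<noteq> 0" "\<bar>\<eta>\<bar> \<le> \<bar>\<rho>\<bar>" "\<bar>\<sigma>\<bar> \<le> \<bar>\<rho>\<bar>"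
  defines "P \<equiv> (\<rho>^2 - \<eta>^2) * (\<rho>^2 - \<sigma>^2)"
  shows "-1 \<le> (- sqrt P - \<eta> * \<sigma>) / \<rho>^2" and "(sqrt P - \<eta> * \<sigma>) / \<rho>^2 \<le> 1"
proof -
  have "\<bar>\<eta> * \<sigma>\<bar> \<le> \<rho>^2"
    using assms(2,3) unfolding abs_mult power2_eq_square
    by (metis abs_ge_zero abs_mult_self_eq mult_mono)
  moreover have "(\<rho>^2 - \<eta> * \<sigma>)^2 = P + \<rho>^2 * (\<eta> - \<sigma>)^2"
    and "(\<rho>^2 + \<eta> * \<sigma>)^2 = P + \<rho>^2 * (\<eta> + \<sigma>)^2"
    unfolding P_def by (simp_all add: power2_eq_square algebra_simps)
  then have "P \<le> (\<rho>^2 - \<eta> * \<sigma>)^2" and "P \<le> (\<rho>^2 + \<eta> * \<sigma>)^2"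
    by simp_all
  ultimately have "sqrt P \<le> \<rho>^2 - \<eta> * \<sigma>" and "sqrt P \<le> \<rho>^2 + \<eta> * \<sigma>"
    using real_sqrt_le_mono by fastforce+
  then show "-1 \<le> (- sqrt P - \<eta> * \<sigma>) / \<rho>^2" and "(sqrt P - \<eta> * \<sigma>) / \<rho>^2 \<le> 1"
    using assms(1) by (simp_all add: field_simps)
qed

section \<open>Binomial coefficients with integer index\<close>

text \<open>Extended by zero to negative indices, binomial coefficient identities hold for all integer
  indices, so index shifts at the ends of a sum need no case distinction.\<close>

definition binom_int :: "real \<Rightarrow> int \<Rightarrow> real" where
  "binom_int r m = (if m < 0 then 0 else r gchoose nat m)"

lemma binom_int_neg [simp]: "m < 0 \<Longrightarrow> binom_int r m = 0"
  by (simp add: binom_int_def)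

lemma binom_int_succ: "(of_int m + 1) * binom_int r (m + 1) = (r - of_int m) * binom_int r m"
proof (cases "m < 0")
  case True
  then show ?thesis
    by (cases "m = -1") (simp_all add: binom_int_def)
next
  case False
  then obtain n where "m = int n"
    by (metis nonneg_int_cases not_less)
  then show ?thesis
    using gbinomial_mult_1[of r n] by (simp add: binom_int_def nat_add_distrib algebra_simps)
qed

lemma binom_int_pred: "of_int m * binom_int r m = (r - of_int m + 1) * binom_int r (m - 1)"
  using binom_int_succ[of "m - 1" r] by (simp add: algebra_simps)

lemma binom_int_absorb_comp: "r * binom_int (r - 1) m = (r - of_int m) * binom_int r m"
  using gbinomial_absorb_comp[of r "nat m"] by (auto simp add: binom_int_def)

lemma binom_int_absorption: "r * binom_int (r - 1) m = of_int (m + 1) * binom_int r (m + 1)"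
  using binom_int_absorb_comp[of r m] binom_int_succ[of m r] by (simp add: algebra_simps)

lemma binom_int_raising_identity:
  "(of_int j + 1) * (binom_int r (m-j) * binom_int t (j+1))
     + (of_int (m-j) + 1) * (binom_int r (m-j+1) * binom_int t j)
   = (r + t - of_int m) * (binom_int r (m-j) * binom_int t j)"
proof -
  have "(of_int j + 1) * (binom_int r (m-j) * binom_int t (j+1))
     + (of_int (m-j) + 1) * (binom_int r (m-j+1) * binom_int t j)
     = binom_int r (m-j) * ((of_int j + 1) * binom_int t (j+1))
     + binom_int t j * ((of_int (m-j) + 1) * binom_int r (m-j+1))"
    by (simp only: ac_simps)
  also have "\<dots> = (r + t - of_int m) * (binom_int r (m-j) * binom_int t j)"
    unfolding binom_int_succ by (simp add: algebra_simps)
  finally show ?thesis .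
qed

lemma binom_int_lowering_identity:
  "(r - of_int (m-j)) * (binom_int r (m-j) * binom_int t j)
     + (t - of_int (j-1)) * (binom_int r (m-j+1) * binom_int t (j-1))
   = (of_int m + 1) * (binom_int r (m-j+1) * binom_int t j)"
proof -
  have tpred: "(t - of_int (j-1)) * binom_int t (j-1) = of_int j * binom_int t j"
    using binom_int_pred[of j t] by (simp add: algebra_simps)
  have "(r - of_int (m-j)) * (binom_int r (m-j) * binom_int t j)
     + (t - of_int (j-1)) * (binom_int r (m-j+1) * binom_int t (j-1))
     = binom_int t j * ((r - of_int (m-j)) * binom_int r (m-j))
     + binom_int r (m-j+1) * ((t - of_int (j-1)) * binom_int t (j-1))"
    by (simp add: algebra_simps)
  also have "\<dots> = (of_int m + 1) * (binom_int r (m-j+1) * binom_int t j)"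
    unfolding binom_int_succ[symmetric] tpred by (simp add: algebra_simps)
  finally show ?thesis .
qed

lemma binom_int_recurrence_identity:
  fixes K S :: int and a b :: real
  defines "r \<equiv> of_int K + a" and "t \<equiv> of_int K + b" and "\<rho> \<equiv> 2 * of_int K + a + b"
  shows "(\<rho> * of_int S - of_int K * t) * (binom_int r (K-S) * binom_int t S)
    + r*t*(binom_int (r-1) (K-1-S) * binom_int (t-1) S)
    + (\<rho> * (of_int K - of_int S + 1) - of_int K * r) * (binom_int r (K-S+1) * binom_int t (S-1))
    - 2*(r*t*(binom_int (r-1) (K-S) * binom_int (t-1) (S-1)))
    + r*t*(binom_int (r-1) (K-S+1) * binom_int (t-1) (S-2)) = 0"
proof -
  have prod: "r*t*(p*q) = (r*p)*(t*q)" for p q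
    by simp
  have "r * binom_int (r-1) (K-1-S) = of_int (K-S) * binom_int r (K-S)"
    using binom_int_absorption[of r "K-1-S"] by simp
  moreover have "t * binom_int (t-1) (S-1) = of_int S * binom_int t S"
    using binom_int_absorption[of t "S-1"] by simp
  moreover have "t * binom_int (t-1) (S-2) = of_int (S-1) * binom_int t (S-1)"
    using binom_int_absorption[of t "S-2"] by simp
  ultimately have e0: "r*t*(binom_int (r-1) (K-1-S) * binom_int (t-1) S)
      = of_int (K-S) * (t - of_int S) * (binom_int r (K-S) * binom_int t S)"
    and e1: "r*t*(binom_int (r-1) (K-S) * binom_int (t-1) (S-1))
      = (r - of_int (K-S)) * of_int S * (binom_int r (K-S) * binom_int t S)"
    and e2: "r*t*(binom_int (r-1) (K-S+1) * binom_int (t-1) (S-2))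
      = (r - of_int (K-S+1)) * of_int (S-1) * (binom_int r (K-S+1) * binom_int t (S-1))"
    unfolding prod binom_int_absorb_comp by simp_all
  have "(of_int (K-S+1)) * binom_int r (K-S+1) = (a + of_int S) * binom_int r (K-S)"
    using binom_int_succ[of "K-S" r] unfolding r_def by (simp add: algebra_simps)
  moreover have "of_int S * binom_int t S = (t - of_int S + 1) * binom_int t (S-1)"
    by (rule binom_int_pred)
  moreover have "?thesis \<longleftrightarrow>
      (t - of_int S + 1) * binom_int t (S-1) * ((of_int (K-S+1)) * binom_int r (K-S+1))
      - (a + of_int S) * binom_int r (K-S) * (of_int S * binom_int t S) = 0"
    unfolding e0 e1 e2 unfolding r_def t_def \<rho>_def by (simp add: algebra_simps)
  ultimately show ?thesis
    by simp
qed

section \<open>Homogeneous sums\<close>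

text \<open>In the variables \<open>X = (x - 1) / 2\<close> and \<open>Y = (x + 1) / 2\<close>, which satisfy \<open>Y - X = 1\<close>,
  the Jacobi polynomial \<open>P\<^sub>k\<close> is homogeneous of degree \<open>k\<close> with products of binomial coefficients
  as coefficients.\<close>

definition hsum :: "nat \<Rightarrow> (int \<Rightarrow> real) \<Rightarrow> real \<Rightarrow> real \<Rightarrow> real" where
  "hsum N c X Y = (\<Sum>s\<le>N. c (int s) * X^s * Y^(N-s))"

lemma hsum_add: "hsum N c X Y + hsum N d X Y = hsum N (\<lambda>j. c j + d j) X Y"
  unfolding hsum_def by (simp add: sum.distrib algebra_simps)

lemma hsum_diff: "hsum N c X Y - hsum N d X Y = hsum N (\<lambda>j. c j - d j) X Y"
  unfolding hsum_def by (simp add: sum_subtractf algebra_simps)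

lemma hsum_cmult: "u * hsum N c X Y = hsum N (\<lambda>j. u * c j) X Y"
  unfolding hsum_def by (simp add: sum_distrib_left algebra_simps)

lemma hsum_mult_X:
  assumes "c (-1) = 0"
  shows "X * hsum N c X Y = hsum (Suc N) (\<lambda>j. c (j - 1)) X Y"
  unfolding hsum_def sum.atMost_Suc_shift
  by (simp add: assms sum_distrib_left algebra_simps)

lemma hsum_mult_Y:
  assumes "c (int N + 1) = 0"
  shows "Y * hsum N c X Y = hsum (Suc N) c X Y"
proof -
  have "c (int (Suc N)) = 0"
    using assms by (simp add: add.commute)
  then show ?thesis
    unfolding hsum_def sum.atMost_Suc
    by (auto simp add: sum_distrib_left algebra_simps Suc_diff_le intro!: sum.cong)
qed

lemma hsum_mult_diff_square:
  assumes "c (-1) = 0" "c (-2) = 0" "c (int N + 1) = 0" "c (int N + 2) = 0"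
  shows "(Y - X)^2 * hsum N c X Y = hsum (Suc (Suc N)) (\<lambda>j. c j - 2 * c (j - 1) + c (j - 2)) X Y"
proof -
  have "(Y - X)^2 * hsum N c X Y
      = Y * (Y * hsum N c X Y) - 2 * (X * (Y * hsum N c X Y)) + X * (X * hsum N c X Y)"
    by (simp add: power2_eq_square algebra_simps)
  also have "\<dots> = hsum (Suc (Suc N)) c X Y - 2 * hsum (Suc (Suc N)) (\<lambda>j. c (j - 1)) X Y
      + hsum (Suc (Suc N)) (\<lambda>j. c (j - 2)) X Y"
    using assms by (simp add: hsum_mult_X hsum_mult_Y add.commute)
  finally show ?thesis
    by (simp add: hsum_add hsum_diff hsum_cmult)
qed

definition dhsum :: "nat \<Rightarrow> (int \<Rightarrow> real) \<Rightarrow> real \<Rightarrow> real \<Rightarrow> real" where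
  "dhsum N c X Y = (\<Sum>s\<le>N. c (int s) *
      (of_nat s * X^(s-1) * Y^(N-s) + of_nat (N-s) * X^s * Y^(N-s-1))) / 2"

lemma has_real_derivative_hsum:
  "((\<lambda>x. hsum N c ((x-1)/2) ((x+1)/2)) has_real_derivative dhsum N c ((x-1)/2) ((x+1)/2)) (at x)"
  unfolding hsum_def dhsum_def sum_divide_distrib
  by (auto intro!: derivative_eq_intros DERIV_sum simp: algebra_simps) (simp add: field_simps)

lemma dhsum_Suc:
  "dhsum (Suc n) c X Y
   = (hsum n (\<lambda>j. of_int (j + 1) * c (j + 1)) X Y + hsum n (\<lambda>j. of_int (int n + 1 - j) * c j) X Y) / 2"
proof -
  have "(\<Sum>s\<le>Suc n. c (int s) * (of_nat s * X^(s-1) * Y^(Suc n-s)))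
      = hsum n (\<lambda>j. of_int (j + 1) * c (j + 1)) X Y"
    unfolding hsum_def sum.atMost_Suc_shift by (simp add: algebra_simps)
  moreover have "(\<Sum>s\<le>Suc n. c (int s) * (of_nat (Suc n - s) * X^s * Y^(Suc n-s-1)))
      = hsum n (\<lambda>j. of_int (int n + 1 - j) * c j) X Y"
    unfolding hsum_def sum.atMost_Suc by (auto simp add: algebra_simps intro!: sum.cong)
  ultimately show ?thesis
    unfolding dhsum_def distrib_left sum.distrib by simp
qed

lemma mult_dhsum:
  "X * Y * dhsum N c X Y
   = (Y * hsum N (\<lambda>j. of_int j * c j) X Y + X * hsum N (\<lambda>j. of_int (int N - j) * c j) X Y) / 2"
proof -
  have per_term: "X * Y * (c (int s) * (of_nat s * X^(s-1) * Y^(N-s) + of_nat (N-s) * X^s * Y^(N-s-1)))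
      = Y * (of_int (int s) * c (int s) * X^s * Y^(N-s))
        + X * (of_int (int N - int s) * c (int s) * X^s * Y^(N-s))" if "s \<le> N" for s
  proof -
    have X: "of_nat s * X * X^(s-1) = of_nat s * X^s"
      by (cases s) auto
    have Y: "of_nat (N-s) * Y * Y^(N-s-1) = of_nat (N-s) * Y^(N-s)"
      by (cases "N-s") auto
    have "X * Y * (c (int s) * (of_nat s * X^(s-1) * Y^(N-s) + of_nat (N-s) * X^s * Y^(N-s-1)))
      = c (int s) * Y * Y^(N-s) * (of_nat s * X * X^(s-1))
        + c (int s) * X * X^s * (of_nat (N-s) * Y * Y^(N-s-1))"
      by (simp add: algebra_simps)
    also have "\<dots> = Y * (of_nat s * c (int s) * X^s * Y^(N-s))
        + X * (of_nat (N-s) * c (int s) * X^s * Y^(N-s))"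
      unfolding X Y by (simp add: algebra_simps)
    finally show ?thesis
      using that by simp
  qed
  have "X * Y * dhsum N c X Y = (\<Sum>s\<le>N. X * Y *
      (c (int s) * (of_nat s * X^(s-1) * Y^(N-s) + of_nat (N-s) * X^s * Y^(N-s-1)))) / 2"
    unfolding dhsum_def by (simp add: sum_distrib_left)
  also have "\<dots> = (\<Sum>s\<le>N. Y * (of_int (int s) * c (int s) * X^s * Y^(N-s))
        + X * (of_int (int N - int s) * c (int s) * X^s * Y^(N-s))) / 2"
    using per_term by (intro arg_cong[where f="\<lambda>u. u / 2"] sum.cong) auto
  finally show ?thesis
    unfolding hsum_def sum.distrib sum_distrib_left .
qed

lemma hsum_first_order:
  assumes "c (-1) = 0" "c (int N + 1) = 0"
  shows "-4 * u * (X * Y * dhsum N c X Y) - 2 * (p * X + q * Y) * hsum N c X Y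
    = -2 * hsum (Suc N) (\<lambda>j. (u * of_int j + q) * c j + (u * of_int (int N - (j - 1)) + p) * c (j - 1)) X Y"
proof -
  define H J L where "H = hsum N c X Y" and "J = hsum N (\<lambda>j. of_int j * c j) X Y"
    and "L = hsum N (\<lambda>j. of_int (int N - j) * c j) X Y"
  have A: "hsum N (\<lambda>j. (u * of_int j + q) * c j) X Y = u * J + q * H"
    and B: "hsum N (\<lambda>j. (u * of_int (int N - j) + p) * c j) X Y = u * L + p * H"
    unfolding H_def J_def L_def hsum_cmult hsum_add by (simp_all add: algebra_simps)
  have "-4 * u * (X * Y * dhsum N c X Y) - 2 * (p * X + q * Y) * hsum N c X Y
      = -2 * (Y * (u * J + q * H) + X * (u * L + p * H))"
    unfolding mult_dhsum J_def[symmetric] L_def[symmetric] H_def[symmetric] by (simp add: field_simps)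
  also have "\<dots> = -2 * (Y * hsum N (\<lambda>j. (u * of_int j + q) * c j) X Y
      + X * hsum N (\<lambda>j. (u * of_int (int N - j) + p) * c j) X Y)"
    unfolding A B ..
  also have "\<dots> = -2 * hsum (Suc N) (\<lambda>j. (u * of_int j + q) * c j
      + (u * of_int (int N - (j - 1)) + p) * c (j - 1)) X Y"
    using assms by (simp add: hsum_mult_X hsum_mult_Y hsum_add)
  finally show ?thesis .
qed

section \<open>Differentiation formulas for Jacobi polynomials\<close>

definition jacobi_coeff :: "nat \<Rightarrow> real \<Rightarrow> real \<Rightarrow> int \<Rightarrow> real" where
  "jacobi_coeff k a b j = binom_int (real k + a) (int k - j) * binom_int (real k + b) j"

lemma jacobiP_eq_hsum: "jacobiP k a b x = hsum k (jacobi_coeff k a b) ((x-1)/2) ((x+1)/2)"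
  unfolding jacobiP_def hsum_def jacobi_coeff_def binom_int_def
  by (intro sum.cong refl) (auto simp: nat_diff_distrib)

lemma jacobiP_has_real_derivative:
  "(jacobiP k a b has_real_derivative dhsum k (jacobi_coeff k a b) ((x-1)/2) ((x+1)/2)) (at x)"
  unfolding jacobiP_eq_hsum[abs_def] by (rule has_real_derivative_hsum)

lemma deriv_jacobiP: "deriv (jacobiP k a b) x = dhsum k (jacobi_coeff k a b) ((x-1)/2) ((x+1)/2)"
  using jacobiP_has_real_derivative by (rule DERIV_imp_deriv)

lemma jacobiP_has_deriv: "(jacobiP k a b has_real_derivative deriv (jacobiP k a b) x) (at x)"
  unfolding deriv_jacobiP by (rule jacobiP_has_real_derivative)

lemma continuous_on_deriv_jacobiP: "continuous_on S (deriv (jacobiP k a b))"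
  unfolding deriv_jacobiP[abs_def] dhsum_def by (intro continuous_intros) auto

lemma continuous_on_jacobiP: "continuous_on S (jacobiP k a b)"
  by (intro continuous_at_imp_continuous_on ballI DERIV_isCont[OF jacobiP_has_real_derivative])

lemma deriv_jacobiP_Suc:
  "deriv (jacobiP (Suc n) a b) x = (real n + a + b + 2) / 2 * jacobiP n (a+1) (b+1) x"
proof -
  have "of_int (j+1) * jacobi_coeff (Suc n) a b (j+1) + of_int (int n + 1 - j) * jacobi_coeff (Suc n) a b j
      = (real n + a + b + 2) * jacobi_coeff n (a+1) (b+1) j" for j
    using binom_int_raising_identity[of j "real (Suc n) + a" "int n" "real (Suc n) + b"]
    unfolding jacobi_coeff_def by (simp add: algebra_simps)
  then have "deriv (jacobiP (Suc n) a b) x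
      = hsum n (\<lambda>j. (real n + a + b + 2) * jacobi_coeff n (a+1) (b+1) j) ((x-1)/2) ((x+1)/2) / 2"
    unfolding deriv_jacobiP dhsum_Suc hsum_add by simp
  then show ?thesis
    unfolding hsum_cmult[symmetric] jacobiP_eq_hsum by simp
qed

lemma jacobiP_lowering:
  "(1 - x^2) * deriv (jacobiP n (a+1) (b+1)) x - ((a - b) + (a + b + 2) * x) * jacobiP n (a+1) (b+1) x
   = -2 * (real n + 1) * jacobiP (Suc n) a b x"
proof -
  define X Y where "X = (x-1)/2" and "Y = (x+1)/2"
  define d where "d = jacobi_coeff n (a+1) (b+1)"
  have "1 - x^2 = -4 * (X * Y)" and "(a - b) + (a + b + 2) * x = 2 * ((b + 1) * X + (a + 1) * Y)"
    unfolding X_def Y_def by (simp_all add: field_simps power2_eq_square)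
  then have "(1 - x^2) * deriv (jacobiP n (a+1) (b+1)) x - ((a - b) + (a + b + 2) * x) * jacobiP n (a+1) (b+1) x
      = -4 * 1 * (X * Y * dhsum n d X Y) - 2 * ((b + 1) * X + (a + 1) * Y) * hsum n d X Y"
    unfolding deriv_jacobiP jacobiP_eq_hsum d_def[symmetric] X_def[symmetric] Y_def[symmetric]
    by (simp add: mult.assoc)
  also have "\<dots> = -2 * hsum (Suc n) (\<lambda>j. (1 * of_int j + (a + 1)) * d j
      + (1 * of_int (int n - (j - 1)) + (b + 1)) * d (j - 1)) X Y"
    by (rule hsum_first_order) (simp_all add: d_def jacobi_coeff_def)
  also have "\<dots> = -2 * hsum (Suc n) (\<lambda>j. (real n + 1) * jacobi_coeff (Suc n) a b j) X Y"
  proof -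
    have "(1 * of_int j + (a + 1)) * d j + (1 * of_int (int n - (j - 1)) + (b + 1)) * d (j - 1)
        = (real n + 1) * jacobi_coeff (Suc n) a b j" for j
      using binom_int_lowering_identity[of "real n + (a+1)" "int n" j "real n + (b+1)"]
      unfolding d_def jacobi_coeff_def by (simp add: algebra_simps)
    then show ?thesis
      by simp
  qed
  finally show ?thesis
    unfolding jacobiP_eq_hsum[of "Suc n" a b x] X_def Y_def hsum_cmult[symmetric]
    by (simp add: algebra_simps)
qed

lemma deriv_jacobiP_has_real_derivative:
  "(deriv (jacobiP k a b) has_real_derivative deriv (deriv (jacobiP k a b)) x) (at x)"
proof (cases k)
  case 0
  have "jacobiP 0 a b = (\<lambda>_. 1)"
    by (simp add: fun_eq_iff jacobiP_def)
  then show ?thesis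
    using 0 by simp
next
  case (Suc n)
  have "deriv (jacobiP (Suc n) a b) = (\<lambda>x. (real n + a + b + 2) / 2 * jacobiP n (a+1) (b+1) x)"
    by (simp add: fun_eq_iff deriv_jacobiP_Suc)
  moreover have "((\<lambda>x. (real n + a + b + 2) / 2 * jacobiP n (a+1) (b+1) x) has_real_derivative
      (real n + a + b + 2) / 2 * deriv (jacobiP n (a+1) (b+1)) x) (at x)"
    by (intro DERIV_cmult jacobiP_has_deriv)
  ultimately show ?thesis
    using Suc DERIV_imp_deriv by metis
qed

lemma jacobiP_ode:
  "(1 - x^2) * deriv (deriv (jacobiP k a b)) x - ((a - b) + (a + b + 2) * x) * deriv (jacobiP k a b) x
   = - real k * (real k + a + b + 1) * jacobiP k a b x"
proof (cases k)
  case 0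
  have "jacobiP 0 a b = (\<lambda>_. 1)"
    by (simp add: fun_eq_iff jacobiP_def)
  then show ?thesis
    using 0 by simp
next
  case (Suc n)
  define m where "m = (real n + a + b + 2) / 2"
  have d1: "deriv (jacobiP (Suc n) a b) = (\<lambda>x. m * jacobiP n (a+1) (b+1) x)"
    by (simp add: fun_eq_iff deriv_jacobiP_Suc m_def)
  have d2: "deriv (deriv (jacobiP (Suc n) a b)) x = m * deriv (jacobiP n (a+1) (b+1)) x"
    unfolding d1 by (rule DERIV_imp_deriv[OF DERIV_cmult[OF jacobiP_has_deriv]])
  have "(1 - x^2) * deriv (deriv (jacobiP (Suc n) a b)) x
      - ((a - b) + (a + b + 2) * x) * deriv (jacobiP (Suc n) a b) x
      = m * ((1 - x^2) * deriv (jacobiP n (a+1) (b+1)) x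
        - ((a - b) + (a + b + 2) * x) * jacobiP n (a+1) (b+1) x)"
    unfolding d2 unfolding d1 by (simp add: algebra_simps)
  then show ?thesis
    unfolding jacobiP_lowering Suc m_def by (simp add: field_simps)
qed

lemma jacobiP_Suc_deriv_recurrence:
  fixes n :: nat and a b x :: real
  defines "k \<equiv> real (Suc n)" and "\<rho> \<equiv> 2 * real (Suc n) + a + b"
  shows "\<rho> * (1 - x^2) * deriv (jacobiP (Suc n) a b) x
    = k * ((a - b) - \<rho> * x) * jacobiP (Suc n) a b x + 2 * (k + a) * (k + b) * jacobiP n a b x"
proof -
  define X Y where "X = (x-1)/2" and "Y = (x+1)/2"
  define c e where "c = jacobi_coeff (Suc n) a b" and "e = jacobi_coeff n a b"
  define r t where "r = k + a" and "t = k + b"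
  have x1: "1 - x^2 = -4 * (X * Y)" and x2: "(a - b) - \<rho> * x = -2 * r * X - 2 * t * Y"
    unfolding X_def Y_def r_def t_def \<rho>_def k_def by (simp_all add: field_simps power2_eq_square)
  have "\<rho> * (1 - x^2) * deriv (jacobiP (Suc n) a b) x - k * ((a - b) - \<rho> * x) * jacobiP (Suc n) a b x
      = -4 * \<rho> * (X * Y * dhsum (Suc n) c X Y) - 2 * (- (k * r) * X + - (k * t) * Y) * hsum (Suc n) c X Y"
    unfolding x1 x2 deriv_jacobiP jacobiP_eq_hsum[of "Suc n" a b x] c_def[symmetric] X_def[symmetric]
      Y_def[symmetric] by (simp add: algebra_simps)
  also have "\<dots> = -2 * hsum (Suc (Suc n)) (\<lambda>j. (\<rho> * of_int j + - (k * t)) * c j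
      + (\<rho> * of_int (int (Suc n) - (j - 1)) + - (k * r)) * c (j - 1)) X Y"
    by (rule hsum_first_order) (simp_all add: c_def jacobi_coeff_def)
  also have "\<dots> = 2 * (r * t) * hsum (Suc (Suc n)) (\<lambda>j. e j - 2 * e (j - 1) + e (j - 2)) X Y"
  proof -
    have "(\<rho> * of_int j + - (k * t)) * c j + (\<rho> * of_int (int (Suc n) - (j - 1)) + - (k * r)) * c (j - 1)
        = - (r * t) * (e j - 2 * e (j - 1) + e (j - 2))" for j
      using binom_int_recurrence_identity[of "int (Suc n)" a b j]
      unfolding c_def e_def jacobi_coeff_def r_def t_def k_def \<rho>_def by (simp add: algebra_simps)
    then show ?thesis
      unfolding hsum_cmult by (simp add: mult.assoc)
  qed
  \<comment> \<open>\<open>P\<^sub>n\<close> is brought to degree \<open>n + 2\<close> by the factor \<open>(Y - X)\<^sup>2 = 1\<close>.\<close>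
  also have "hsum (Suc (Suc n)) (\<lambda>j. e j - 2 * e (j - 1) + e (j - 2)) X Y = (Y - X)^2 * hsum n e X Y"
    by (rule hsum_mult_diff_square[symmetric]) (simp_all add: e_def jacobi_coeff_def)
  also have "\<dots> = jacobiP n a b x"
    unfolding jacobiP_eq_hsum X_def Y_def e_def by (simp add: field_simps)
  finally show ?thesis
    unfolding r_def t_def by (simp add: algebra_simps)
qed

section \<open>The Jacobi weight and the norms of Jacobi polynomials\<close>

definition jacobi_weight :: "real \<Rightarrow> real \<Rightarrow> real \<Rightarrow> real" where
  "jacobi_weight a b x = (1 - x) powr a * (1 + x) powr b"

lemma jacobi_weight_nonneg: "0 \<le> jacobi_weight a b x"
  unfolding jacobi_weight_def by simp

lemma jacobi_weight_endpoints [simp]: "jacobi_weight a b 1 = 0" "jacobi_weight a b (-1) = 0"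
  unfolding jacobi_weight_def by simp_all

lemma continuous_on_jacobi_weight:
  "0 < a \<Longrightarrow> 0 < b \<Longrightarrow> continuous_on {-1..1} (jacobi_weight a b)"
  unfolding jacobi_weight_def by (intro continuous_intros continuous_on_powr') auto

lemma jacobi_weight_plus1:
  "-1 \<le> x \<Longrightarrow> x \<le> 1 \<Longrightarrow> jacobi_weight (a+1) (b+1) x = (1 - x^2) * jacobi_weight a b x"
  unfolding jacobi_weight_def powr_add by (simp add: power2_eq_square algebra_simps)

lemma jacobi_weight_plus1_has_real_derivative:
  assumes "-1 < x" "x < 1"
  shows "(jacobi_weight (a+1) (b+1) has_real_derivative
      - ((a - b) + (a + b + 2) * x) * jacobi_weight a b x) (at x)"
proof -
  have "(jacobi_weight (a+1) (b+1) has_real_derivative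
      (a+1) * (1-x) powr a * (-1) * (1+x) powr (b+1) + (1-x) powr (a+1) * ((b+1) * (1+x) powr b)) (at x)"
    unfolding jacobi_weight_def using assms by (auto intro!: derivative_eq_intros)
  moreover have "(a+1) * (1-x) powr a * (-1) * (1+x) powr (b+1) + (1-x) powr (a+1) * ((b+1) * (1+x) powr b)
      = - ((a - b) + (a + b + 2) * x) * jacobi_weight a b x"
    using assms unfolding jacobi_weight_def powr_add by (simp add: algebra_simps)
  ultimately show ?thesis
    by simp
qed

lemma jacobi_weight_has_integral:
  assumes "-1 < a" "-1 < b"
  shows "(jacobi_weight a b has_integral 2 powr (a + b + 1) * Beta (a + 1) (b + 1)) {-1..1}"
proof -
  have "((\<lambda>t. t powr b * (1 - t) powr a) has_integral Beta (b + 1) (a + 1)) (cbox 0 1)"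
    using has_integral_Beta_real[of "b + 1" "a + 1"] assms by simp
  from has_integral_affinity[OF this, of "1/2" "1/2"]
  have "((\<lambda>x. ((x + 1) / 2) powr b * ((1 - x) / 2) powr a) has_integral 2 * Beta (b + 1) (a + 1))
      ((\<lambda>x. 2 * x - 1) ` {0..1})"
    by (simp add: field_simps)
  moreover have "(\<lambda>x::real. 2 * x - 1) ` {0..1} = {-1..1}"
  proof
    show "{-1..1} \<subseteq> (\<lambda>x::real. 2 * x - 1) ` {0..1}"
    proof
      fix y :: real
      assume "y \<in> {-1..1}"
      then show "y \<in> (\<lambda>x. 2 * x - 1) ` {0..1}"
        by (intro image_eqI[where x="(y + 1) / 2"]) (auto simp: field_simps)
    qed
  qed auto
  ultimately have "((\<lambda>x. 2 powr (a + b) * (((x + 1) / 2) powr b * ((1 - x) / 2) powr a))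
      has_integral 2 powr (a + b) * (2 * Beta (b + 1) (a + 1))) {-1..1}"
    by (intro has_integral_mult_right) simp
  moreover have "2 powr (a + b) * (((x + 1) / 2) powr b * ((1 - x) / 2) powr a) = jacobi_weight a b x" for x
    unfolding jacobi_weight_def powr_divide powr_add by (simp add: field_simps)
  moreover have "2 powr (a + b) * (2 * Beta (b + 1) (a + 1)) = 2 powr (a + b + 1) * Beta (a + 1) (b + 1)"
    by (simp add: powr_add Beta_commute)
  ultimately show ?thesis
    by simp
qed

lemma Gamma_plus1_real: "-1 < z \<Longrightarrow> z \<noteq> 0 \<Longrightarrow> Gamma (z + 1) = z * Gamma (z :: real)"
  by (rule Gamma_plus1) (auto elim!: nonpos_Ints_cases)

text \<open>At \<open>a + b = -1\<close> the factor \<open>(a + b + 1) * Gamma (a + b + 1)\<close> in the definition of \<open>h\<^sub>0\<close>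
  is a removable singularity, where the formula evaluates to \<open>0\<close> instead of its limit.\<close>

lemma jacobi_hsq_0:
  "-1 < a \<Longrightarrow> -1 < b \<Longrightarrow> a + b \<noteq> -1 \<Longrightarrow> jacobi_hsq 0 a b = 2 powr (a + b + 1) * Beta (a + 1) (b + 1)"
  unfolding jacobi_hsq_def Beta_def
  using Gamma_plus1_real[of "a + b + 1"] by (simp add: add_ac)

lemma jacobi_hsq_Suc:
  assumes "-1 < a" "-1 < b"
  shows "jacobi_hsq (Suc n) a b = (real n + a + b + 2) / (4 * (real n + 1)) * jacobi_hsq n (a+1) (b+1)"
proof -
  define GS where "GS = Gamma (real (Suc n) + a + b + 1)"
  have pos: "0 < real n + a + b + 2" "0 < 2 * real n + a + b + 3"
    using assms by simp_all
  have "Gamma (real n + (a + 1) + (b + 1) + 1) = (real n + a + b + 2) * GS"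
    using Gamma_plus1_real[of "real n + a + b + 2"] pos unfolding GS_def by (simp add: add_ac)
  moreover have "Gamma (real n + (a + 1) + 1) = Gamma (real (Suc n) + a + 1)"
    and "Gamma (real n + (b + 1) + 1) = Gamma (real (Suc n) + b + 1)"
    by (simp_all add: add_ac)
  moreover have "a + 1 + (b + 1) + 1 = (a + b + 1) + 2"
    by simp
  moreover have "GS > 0"
    using pos unfolding GS_def by simp
  ultimately show ?thesis
    unfolding jacobi_hsq_def GS_def[symmetric] using pos
    by (simp add: powr_add divide_simps ac_simps)
qed

lemma jacobi_hsq_ratio:
  fixes n :: nat and a b :: real
  defines "k \<equiv> real (Suc n)" and "\<rho> \<equiv> 2 * real (Suc n) + a + b"
  assumes "-1 < a" "-1 < b" "-1 < a + b"
  shows "jacobi_hsq n a b = (\<rho> + 1) * k * (k + a + b) / ((k + a) * (k + b) * (\<rho> - 1)) * jacobi_hsq (Suc n) a b"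
proof -
  define GA GB GS where "GA = Gamma (real n + a + 1)" and "GB = Gamma (real n + b + 1)"
    and "GS = Gamma (real n + a + b + 1)"
  have pos: "0 < real n + a + 1" "0 < real n + b + 1" "0 < real n + a + b + 1"
    using assms by simp_all
  have "Gamma (real (Suc n) + a + 1) = (real n + a + 1) * GA"
    using Gamma_plus1_real[of "real n + a + 1"] pos unfolding GA_def by (simp add: add_ac)
  moreover have "Gamma (real (Suc n) + b + 1) = (real n + b + 1) * GB"
    using Gamma_plus1_real[of "real n + b + 1"] pos unfolding GB_def by (simp add: add_ac)
  moreover have "Gamma (real (Suc n) + a + b + 1) = (real n + a + b + 1) * GS"
    using Gamma_plus1_real[of "real n + a + b + 1"] pos unfolding GS_def by (simp add: add_ac)
  moreover have "GS > 0"
    using pos unfolding GS_def by simp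
  ultimately show ?thesis
    unfolding jacobi_hsq_def GA_def[symmetric] GB_def[symmetric] GS_def[symmetric] k_def \<rho>_def using pos
    by (simp add: divide_simps ac_simps)
qed

lemma weighted_jacobiP_has_real_derivative:
  assumes "-1 < x" "x < 1"
  shows "((\<lambda>x. jacobi_weight (a+1) (b+1) x * jacobiP n (a+1) (b+1) x) has_real_derivative
      -2 * (real n + 1) * jacobi_weight a b x * jacobiP (Suc n) a b x) (at x)"
proof -
  have w: "jacobi_weight (a+1) (b+1) x = (1 - x^2) * jacobi_weight a b x"
    using assms by (simp add: jacobi_weight_plus1)
  have "((\<lambda>x. jacobi_weight (a+1) (b+1) x * jacobiP n (a+1) (b+1) x) has_real_derivative
      - ((a - b) + (a + b + 2) * x) * jacobi_weight a b x * jacobiP n (a+1) (b+1) x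
      + deriv (jacobiP n (a+1) (b+1)) x * jacobi_weight (a+1) (b+1) x) (at x)"
    by (rule DERIV_mult[OF jacobi_weight_plus1_has_real_derivative[OF assms] jacobiP_has_deriv])
  also have "- ((a - b) + (a + b + 2) * x) * jacobi_weight a b x * jacobiP n (a+1) (b+1) x
      + deriv (jacobiP n (a+1) (b+1)) x * jacobi_weight (a+1) (b+1) x
      = jacobi_weight a b x * ((1 - x^2) * deriv (jacobiP n (a+1) (b+1)) x
        - ((a - b) + (a + b + 2) * x) * jacobiP n (a+1) (b+1) x)"
    unfolding w by (simp add: algebra_simps)
  also have "\<dots> = -2 * (real n + 1) * jacobi_weight a b x * jacobiP (Suc n) a b x"
    unfolding jacobiP_lowering by simp
  finally show ?thesis .
qed

lemma jacobiP_norm: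
  assumes "-1 < a" "-1 < b" "a + b \<noteq> -1"
  shows "((\<lambda>x. jacobi_weight a b x * (jacobiP k a b x)^2) has_integral jacobi_hsq k a b) {-1..1}"
  using assms
proof (induction k arbitrary: a b)
  case 0
  then show ?case
    using jacobi_weight_has_integral[of a b] by (simp add: jacobiP_def jacobi_hsq_0)
next
  case (Suc n)
  define m where "m = (real n + a + b + 2) / 2"
  define W where "W = (\<lambda>x. jacobi_weight a b x * (jacobiP (Suc n) a b x)^2)"
  define V where "V = (\<lambda>x. jacobi_weight (a+1) (b+1) x * (jacobiP n (a+1) (b+1) x)^2)"
  define v where "v = (\<lambda>x. jacobi_weight (a+1) (b+1) x * jacobiP n (a+1) (b+1) x)"
  define F where "F = (\<lambda>x. v x * jacobiP (Suc n) a b x)"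
  have "(F has_real_derivative -2 * (real n + 1) * W x + m * V x) (at x)" if "-1 < x" "x < 1" for x
  proof -
    have "(F has_real_derivative -2 * (real n + 1) * jacobi_weight a b x * jacobiP (Suc n) a b x
        * jacobiP (Suc n) a b x + deriv (jacobiP (Suc n) a b) x * v x) (at x)"
      unfolding F_def v_def
      by (rule DERIV_mult[OF weighted_jacobiP_has_real_derivative[OF that] jacobiP_has_deriv])
    then show ?thesis
      unfolding deriv_jacobiP_Suc v_def m_def W_def V_def by (simp add: power2_eq_square algebra_simps)
  qed
  moreover have "continuous_on {-1..1} F"
    unfolding F_def v_def using Suc.prems
    by (intro continuous_intros continuous_on_jacobi_weight continuous_on_jacobiP) auto
  ultimately have "((\<lambda>x. -2 * (real n + 1) * W x + m * V x) has_integral F 1 - F (-1)) {-1..1}"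
    by (intro fundamental_theorem_of_calculus_interior)
      (auto simp: has_real_derivative_iff_has_vector_derivative[symmetric])
  moreover have "F 1 = 0" "F (-1) = 0"
    unfolding F_def v_def by simp_all
  moreover have "(V has_integral jacobi_hsq n (a+1) (b+1)) {-1..1}"
    using Suc.IH[of "a+1" "b+1"] Suc.prems unfolding V_def by simp
  ultimately have "((\<lambda>x. (m * V x - (-2 * (real n + 1) * W x + m * V x)) / (2 * (real n + 1)))
      has_integral (m * jacobi_hsq n (a+1) (b+1) - 0) / (2 * (real n + 1))) {-1..1}"
    by (intro has_integral_divide has_integral_diff has_integral_mult_right) simp_all
  moreover have "(\<lambda>x. (m * V x - (-2 * (real n + 1) * W x + m * V x)) / (2 * (real n + 1))) = W"
    by (simp add: fun_eq_iff field_simps)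
  moreover have "(m * jacobi_hsq n (a+1) (b+1) - 0) / (2 * (real n + 1)) = jacobi_hsq (Suc n) a b"
    unfolding jacobi_hsq_Suc[OF Suc.prems(1,2)] m_def by (simp add: field_simps)
  ultimately show ?case
    unfolding W_def by simp
qed

lemma continuous_on_jacobiW: "continuous_on S (jacobiW k a b)"
  unfolding jacobiW_def Let_def
  by (intro continuous_intros continuous_on_jacobiP continuous_on_deriv_jacobiP)

lemma jacobiW_derivative_identity:
  fixes K a b t y y' y'' z :: real
  defines "\<rho> \<equiv> 2 * K + a + b"
  assumes ode: "(1 - t^2) * y'' - ((a - b) + (a + b + 2) * t) * y' = - K * (K + a + b + 1) * y"
    and recurrence: "\<rho> * (1 - t^2) * y' = K * ((a - b) - \<rho> * t) * y + 2 * (K + a) * (K + b) * z"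
  shows "- ((a - b) + (a + b + 2) * t)
      * ((\<rho>^2 - (a + b)^2) * y^2 - 4 * ((a - b) + (a + b) * t) * y * y' + 4 * (1 - t^2) * y'^2)
    + (1 - t^2) * ((\<rho>^2 - (a + b)^2) * (2 * y * y') - 4 * (a + b) * y * y'
      - 4 * ((a - b) + (a + b) * t) * (y'^2 + y * y'') + 4 * (-2 * t * y'^2 + (1 - t^2) * (2 * y' * y'')))
    = -8 * (K + a) * (K + b) * y * z"
  using ode recurrence unfolding \<rho>_def by algebra

lemma jacobiW_has_real_derivative:
  fixes k :: nat and a b t :: real
  defines "y \<equiv> jacobiP k a b" and "\<rho> \<equiv> 2 * real k + a + b"
  shows "(jacobiW k a b has_real_derivative
      (\<rho>^2 - (a + b)^2) * (2 * y t * deriv y t) - 4 * (a + b) * y t * deriv y t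
      - 4 * ((a - b) + (a + b) * t) * ((deriv y t)^2 + y t * deriv (deriv y) t)
      + 4 * (-2 * t * (deriv y t)^2 + (1 - t^2) * (2 * deriv y t * deriv (deriv y) t))) (at t)"
proof -
  have W: "jacobiW k a b = (\<lambda>t. (\<rho>^2 - (a + b)^2) * (y t)^2
      - 4 * ((a - b) + (a + b) * t) * y t * deriv y t + 4 * (1 - t^2) * (deriv y t)^2)"
    unfolding jacobiW_def y_def \<rho>_def by (simp add: fun_eq_iff Let_def)
  have dy: "(y has_real_derivative deriv y s) (at s)" "(deriv y has_real_derivative deriv (deriv y) s) (at s)" for s
    unfolding y_def by (rule jacobiP_has_deriv deriv_jacobiP_has_real_derivative)+
  show ?thesis
    unfolding W by (rule derivative_eq_intros dy refl | simp)+ (simp add: algebra_simps power2_eq_square)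
qed

lemma weighted_jacobiW_has_real_derivative:
  fixes n :: nat and a b t :: real
  defines "K \<equiv> real (Suc n)"
  assumes t: "-1 < t" "t < 1"
  shows "((\<lambda>t. jacobi_weight (a+1) (b+1) t * jacobiW (Suc n) a b t) has_real_derivative
      -8 * (K + a) * (K + b) * jacobi_weight a b t * jacobiP (Suc n) a b t * jacobiP n a b t) (at t)"
proof -
  define \<rho> y where "\<rho> = 2 * K + a + b" and "y = jacobiP (Suc n) a b"
  define W' where "W' = (\<rho>^2 - (a + b)^2) * (2 * y t * deriv y t) - 4 * (a + b) * y t * deriv y t
      - 4 * ((a - b) + (a + b) * t) * ((deriv y t)^2 + y t * deriv (deriv y) t)
      + 4 * (-2 * t * (deriv y t)^2 + (1 - t^2) * (2 * deriv y t * deriv (deriv y) t))"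
  have "(jacobiW (Suc n) a b has_real_derivative W') (at t)"
    unfolding W'_def y_def \<rho>_def K_def by (rule jacobiW_has_real_derivative)
  from DERIV_mult[OF jacobi_weight_plus1_has_real_derivative[OF t, of a b] this]
  have "((\<lambda>t. jacobi_weight (a+1) (b+1) t * jacobiW (Suc n) a b t) has_real_derivative
      - ((a - b) + (a + b + 2) * t) * jacobi_weight a b t * jacobiW (Suc n) a b t
      + W' * jacobi_weight (a+1) (b+1) t) (at t)" .
  also have "- ((a - b) + (a + b + 2) * t) * jacobi_weight a b t * jacobiW (Suc n) a b t
      + W' * jacobi_weight (a+1) (b+1) t = jacobi_weight a b t
      * (- ((a - b) + (a + b + 2) * t) * jacobiW (Suc n) a b t + (1 - t^2) * W')"
    unfolding jacobi_weight_plus1[OF less_imp_le[OF t(1)] less_imp_le[OF t(2)]] by (simp add: algebra_simps)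
  also have "jacobiW (Suc n) a b t = (\<rho>^2 - (a + b)^2) * (y t)^2
      - 4 * ((a - b) + (a + b) * t) * y t * deriv y t + 4 * (1 - t^2) * (deriv y t)^2"
    unfolding jacobiW_def y_def \<rho>_def K_def by (simp add: Let_def)
  also have "- ((a - b) + (a + b + 2) * t) * ((\<rho>^2 - (a + b)^2) * (y t)^2
      - 4 * ((a - b) + (a + b) * t) * y t * deriv y t + 4 * (1 - t^2) * (deriv y t)^2) + (1 - t^2) * W'
      = -8 * (K + a) * (K + b) * y t * jacobiP n a b t"
    unfolding W'_def \<rho>_def
  proof (rule jacobiW_derivative_identity)
    show "(1 - t^2) * deriv (deriv y) t - ((a - b) + (a + b + 2) * t) * deriv y t
        = - K * (K + a + b + 1) * y t"
      unfolding y_def K_def by (rule jacobiP_ode)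
    show "(2 * K + a + b) * (1 - t^2) * deriv y t
        = K * ((a - b) - (2 * K + a + b) * t) * y t + 2 * (K + a) * (K + b) * jacobiP n a b t"
      unfolding y_def K_def by (rule jacobiP_Suc_deriv_recurrence)
  qed
  finally show ?thesis
    unfolding y_def by (simp add: algebra_simps)
qed

lemma weighted_jacobiW_le_hsq:
  fixes n :: nat and a b x \<theta> :: real
  defines "K \<equiv> real (Suc n)"
  assumes ab: "-1 < a" "-1 < b" "a + b \<noteq> -1" and x: "-1 \<le> x" "x \<le> 1" and \<theta>: "0 < \<theta>"
  shows "2 * (jacobi_weight (a+1) (b+1) x * jacobiW (Suc n) a b x)
    \<le> 4 * (K + a) * (K + b) * (\<theta> * jacobi_hsq (Suc n) a b + jacobi_hsq n a b / \<theta>)"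
proof -
  define c where "c = 4 * (K + a) * (K + b)"
  define G where "G t = c * jacobi_weight a b t
      * (\<theta> * (jacobiP (Suc n) a b t)^2 + (jacobiP n a b t)^2 / \<theta>)" for t
  have c: "0 \<le> c"
    using ab unfolding c_def K_def by simp
  have "((\<lambda>t. c * (\<theta> * (jacobi_weight a b t * (jacobiP (Suc n) a b t)^2)
      + jacobi_weight a b t * (jacobiP n a b t)^2 / \<theta>))
      has_integral c * (\<theta> * jacobi_hsq (Suc n) a b + jacobi_hsq n a b / \<theta>)) {-1..1}"
    using ab by (intro has_integral_mult_right has_integral_add has_integral_divide jacobiP_norm)
  moreover have "(\<lambda>t. c * (\<theta> * (jacobi_weight a b t * (jacobiP (Suc n) a b t)^2)
      + jacobi_weight a b t * (jacobiP n a b t)^2 / \<theta>)) = G"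
    unfolding G_def by (simp add: fun_eq_iff algebra_simps)
  ultimately have "(G has_integral c * (\<theta> * jacobi_hsq (Suc n) a b + jacobi_hsq n a b / \<theta>)) {-1..1}"
    by simp
  then show ?thesis
    unfolding c_def[symmetric]
  proof (rule double_le_integral_if_abs_deriv_le[OF x, rotated -1])
    show "continuous_on {-1..1} (\<lambda>t. jacobi_weight (a+1) (b+1) t * jacobiW (Suc n) a b t)"
      using ab by (intro continuous_intros continuous_on_jacobi_weight continuous_on_jacobiW) auto
    show "((\<lambda>t. jacobi_weight (a+1) (b+1) t * jacobiW (Suc n) a b t) has_real_derivative
        - 2 * c * jacobi_weight a b t * jacobiP (Suc n) a b t * jacobiP n a b t) (at t)"
      if "-1 < t" "t < 1" for t
      using weighted_jacobiW_has_real_derivative[OF that, of a b n] unfolding c_def K_def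
      by (simp add: algebra_simps)
    show "\<bar>- 2 * c * jacobi_weight a b t * jacobiP (Suc n) a b t * jacobiP n a b t\<bar> \<le> G t" for t
    proof -
      have "\<bar>- 2 * c * jacobi_weight a b t * jacobiP (Suc n) a b t * jacobiP n a b t\<bar>
          = c * jacobi_weight a b t * (2 * \<bar>jacobiP (Suc n) a b t * jacobiP n a b t\<bar>)"
        using c jacobi_weight_nonneg[of a b t] by (simp add: abs_mult)
      also have "\<dots> \<le> G t"
        unfolding G_def
        by (rule mult_left_mono[OF abs_mult_le_weighted_squares[OF \<theta>]])
          (use c jacobi_weight_nonneg[of a b t] in simp)
      finally show ?thesis .
    qed
  qed simp_all
qed

lemma jacobi_gamma_bounds:
  assumes "1 \<le> k" "-1 < a" "-1 < b" "-1 < a + b"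
  shows "-1 \<le> jacobi_gamma k a b (-1)" and "jacobi_gamma k a b 1 \<le> 1"
proof -
  have "2 * real k + a + b \<noteq> 0" "\<bar>a - b\<bar> \<le> \<bar>2 * real k + a + b\<bar>" "\<bar>a + b\<bar> \<le> \<bar>2 * real k + a + b\<bar>"
    using assms by linarith+
  from sqrt_discriminant_bounds[OF this]
  show "-1 \<le> jacobi_gamma k a b (-1)" and "jacobi_gamma k a b 1 \<le> 1"
    unfolding jacobi_gamma_def Let_def by simp_all
qed

lemma jacobi_weight_jacobiW_le:
  fixes n :: nat and a b x :: real
  defines "\<rho> \<equiv> 2 * real (Suc n) + a + b"
  assumes ab: "-1 < a" "-1 < b" "-1 < a + b" and x: "-1 \<le> x" "x \<le> 1"
  shows "jacobi_weight (a+1) (b+1) x * jacobiW (Suc n) a b x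
    \<le> \<rho> * sqrt ((\<rho>^2 - (a - b)^2) * (\<rho>^2 - (a + b)^2)) / (\<rho> - 1) * jacobi_hsq (Suc n) a b"
proof -
  define K r s where "K = real (Suc n)" and "r = K + a" and "s = K + b"
  define S where "S = sqrt ((\<rho>^2 - (a - b)^2) * (\<rho>^2 - (a + b)^2))"
  define hk where "hk = jacobi_hsq (Suc n) a b"
  have pos: "0 < r" "0 < s" "1 < \<rho>"
    using ab unfolding r_def s_def K_def \<rho>_def by simp_all
  have "(\<rho>^2 - (a - b)^2) * (\<rho>^2 - (a + b)^2) = 16 * r * s * K * (K + a + b)"
    unfolding \<rho>_def r_def s_def K_def by (simp add: power2_eq_square algebra_simps)
  moreover have "0 < K" "0 < K + a + b"
    using ab unfolding K_def by simp_all
  ultimately have S2: "S^2 = 16 * r * s * K * (K + a + b)" and S: "0 < S"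
    unfolding S_def using pos by simp_all
  have hn: "jacobi_hsq n a b = (\<rho> + 1) * K * (K + a + b) / (r * s * (\<rho> - 1)) * hk"
    unfolding hk_def r_def s_def K_def \<rho>_def using ab by (rule jacobi_hsq_ratio)
  have bound: "2 * (jacobi_weight (a+1) (b+1) x * jacobiW (Suc n) a b x)
      \<le> 4 * r * s * (S / (4 * r * s) * hk + jacobi_hsq n a b / (S / (4 * r * s)))"
    using weighted_jacobiW_le_hsq[of a b x "S / (4 * r * s)" n] ab x S pos
    unfolding r_def s_def K_def hk_def by simp
  have "4 * r * s * (jacobi_hsq n a b / (S / (4 * r * s)))
      = (\<rho> + 1) * hk * (16 * r * s * K * (K + a + b)) / ((\<rho> - 1) * S)"
    unfolding hn using pos S by (simp add: field_simps)
  also have "\<dots> = (\<rho> + 1) * hk * S / (\<rho> - 1)"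
    unfolding S2[symmetric] using S by (simp add: power2_eq_square)
  finally have "4 * r * s * (S / (4 * r * s) * hk + jacobi_hsq n a b / (S / (4 * r * s)))
      = S * hk + (\<rho> + 1) * hk * S / (\<rho> - 1)"
    using pos by (simp add: distrib_left)
  also have "\<dots> = 2 * (\<rho> * S / (\<rho> - 1) * hk)"
    using pos by (simp add: field_simps)
  finally show ?thesis
    using bound unfolding S_def hk_def by simp
qed

theorem lemma7:
  fixes k :: nat and \<alpha> \<beta> x :: real
  assumes "k \<ge> 1" and "\<alpha> > \<beta>" and "\<beta> > 0"
    and "x \<in> {jacobi_gamma k \<alpha> \<beta> (-1) <..< jacobi_gamma k \<alpha> \<beta> 1}"
  shows "(1 - x) powr (\<alpha> + 1) * (1 + x) powr (\<beta> + 1) * jacobiW k \<alpha> \<beta> x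
    \<le> (let \<eta> = \<alpha> - \<beta>; \<sigma> = \<alpha> + \<beta>; \<rho> = 2 * real k + \<alpha> + \<beta>
        in \<rho> * sqrt ((\<rho>^2 - \<eta>^2) * (\<rho>^2 - \<sigma>^2)) / (\<rho> - 1)) * jacobi_hsq k \<alpha> \<beta>"
proof -
  obtain n where k: "k = Suc n"
    using assms(1) by (cases k) auto
  have ab: "-1 < \<alpha>" "-1 < \<beta>" "-1 < \<alpha> + \<beta>"
    using assms(2,3) by simp_all
  have "-1 \<le> x" "x \<le> 1"
    using assms(4) jacobi_gamma_bounds[OF assms(1) ab] by auto
  from jacobi_weight_jacobiW_le[OF ab this, of n]
  show ?thesis
    unfolding k jacobi_weight_def Let_def by simp
qed

end
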